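(* Let $2\le k\le n-1$ and consider the circulant digraph $C_n(\{1,k\})$ with vertex set $\{v_0,\dots,v_{n-1}\}$. If $n\ge (k-1)\lceil n/k\rceil$, then for every $0\le i\le n-1$, $$d(v_0,v_i)=\left\lfloor \frac{i}{k}\right\rfloor + re(i,k),$$ and moreover $$\mathrm{diam}(C_n(\{1,k\}))=\left\lfloor\frac{n-1}{k}\right\rfloor+\max\{re(n-1,k),\,k-2\}.$$
   Context: For $n\ge 2$ and $S\subseteq\{1,\dots,n-1\}$, the circulant digraph $C_n(S)$ has vertex set $\{v_0,\dots,v_{n-1}\}$ and arcs $v_iv_j$ for all $i,j$ with $j-i\equiv s\pmod n$ for some $s\in S$. $d(x,y)$ denotes the length of a shortest directed $xy$-path and $\mathrm{diam}$ is the maximum of $d(x,y)$ over ordered pairs of vertices. For nonnegative integers $i$ and positive $k$, $re(i,k)$ denotes the remainder of $i$ modulo $k$ (in $\{0,\dots,k-1\}$). *)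

theory Defs
  imports Complex_Main
begin

text \<open>Circulant digraph C_n(S): vertices v_0..v_{n-1} are represented by the naturals 0..n-1;
  there is an arc from v_i to v_j iff j - i is congruent mod n to some s in S.\<close>

definition circ_arc :: "nat \<Rightarrow> nat set \<Rightarrow> nat \<Rightarrow> nat \<Rightarrow> bool" where
  "circ_arc n S i j \<longleftrightarrow> i < n \<and> j < n \<and> (\<exists>s\<in>S. (int j - int i) mod int n = int s mod int n)"

fun circ_walk :: "nat \<Rightarrow> nat set \<Rightarrow> nat \<Rightarrow> nat \<Rightarrow> nat \<Rightarrow> bool" where
  "circ_walk n S x y 0 \<longleftrightarrow> x < n \<and> x = y"
| "circ_walk n S x y (Suc m) \<longleftrightarrow> (\<exists>z. circ_arc n S x z \<and> circ_walk n S z y m)"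

definition circ_dist :: "nat \<Rightarrow> nat set \<Rightarrow> nat \<Rightarrow> nat \<Rightarrow> nat" where
  "circ_dist n S x y = (LEAST m. circ_walk n S x y m)"

definition circ_diam :: "nat \<Rightarrow> nat set \<Rightarrow> nat" where
  "circ_diam n S = Max {circ_dist n S x y | x y. x < n \<and> y < n}"

end

theory Submission
  imports Defs
begin

text \<open>A walk in \<open>C\<^sub>n({1,k})\<close> with \<open>a\<close> steps of length 1 and \<open>b\<close> steps of length \<open>k\<close>
  reaches \<open>v\<^sub>i\<close> iff \<open>a + b k \<equiv> i (mod n)\<close>. Write \<open>i = Q k + R\<close> and \<open>c = \<lceil>n/k\<rceil>\<close>. If the walk
  winds \<open>t\<close> times around the cycle, then \<open>a + b k = i + t n < (Q + 1 + t c) k\<close>, so \<open>b \<le> Q + t c\<close>,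
  and the hypothesis \<open>(k - 1) c \<le> n\<close> gives
  \<open>a + b = a + b k - b (k - 1) \<ge> i + t n - (Q + t c)(k - 1) \<ge> Q + R\<close>.
  The walk using \<open>R\<close> short and \<open>Q\<close> long steps attains this bound. Since circulants are
  vertex-transitive, the diameter is the maximum of \<open>j div k + j mod k\<close> over \<open>j \<le> n - 1\<close>.\<close>

lemma circ_arc_iff:
  assumes "i < n"
  shows "circ_arc n S i j \<longleftrightarrow> j < n \<and> (\<exists>s\<in>S. j = (i + s) mod n)"
proof -
  have "(int j - int i) mod int n = int s mod int n \<longleftrightarrow> j = (i + s) mod n" if "j < n" for s
  proof -
    have "(int j - int i) mod int n = int s mod int n \<longleftrightarrow> int j mod int n = int (i + s) mod int n"
      by (simp add: mod_eq_dvd_iff algebra_simps)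
    also have "\<dots> \<longleftrightarrow> j = (i + s) mod n"
      using that by (metis mod_less of_nat_eq_iff zmod_int)
    finally show ?thesis .
  qed
  then show ?thesis
    unfolding circ_arc_def using assms by auto
qed

lemma ex_add_eq_Suc_iff:
  "(\<exists>a b. a + b = Suc m \<and> P a b) \<longleftrightarrow> (\<exists>a b. a + b = m \<and> (P (Suc a) b \<or> P a (Suc b)))"
proof
  assume "\<exists>a b. a + b = Suc m \<and> P a b"
  then obtain a b where "a + b = Suc m" "P a b" by blast
  then show "\<exists>a b. a + b = m \<and> (P (Suc a) b \<or> P a (Suc b))"
  proof (cases a)
    case 0
    with \<open>a + b = Suc m\<close> \<open>P a b\<close> show ?thesis
      by (intro exI[of _ 0] exI[of _ m]) simp
  qed auto
next
  assume "\<exists>a b. a + b = m \<and> (P (Suc a) b \<or> P a (Suc b))"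
  then show "\<exists>a b. a + b = Suc m \<and> P a b"
    by (metis add_Suc add_Suc_right)
qed

lemma circ_walk_two_iff:
  "circ_walk n {s, t} x y m \<longleftrightarrow> x < n \<and> (\<exists>a b. a + b = m \<and> y = (x + a * s + b * t) mod n)"
proof (induction m arbitrary: x)
  case 0
  then show ?case by auto
next
  case (Suc m)
  show ?case
  proof (cases "x < n")
    case True
    have walk_from: "circ_walk n {s, t} ((x + d) mod n) y m \<longleftrightarrow>
        (\<exists>a b. a + b = m \<and> y = (x + d + a * s + b * t) mod n)" for d
      unfolding Suc.IH using True by (simp add: add.assoc mod_add_left_eq)
    have "circ_walk n {s, t} x y (Suc m) \<longleftrightarrow>
        circ_walk n {s, t} ((x + s) mod n) y m \<or> circ_walk n {s, t} ((x + t) mod n) y m"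
      using True by (auto simp: circ_arc_iff intro: exI[of _ "(x + s) mod n"] exI[of _ "(x + t) mod n"])
    also have "\<dots> \<longleftrightarrow> (\<exists>a b. a + b = m \<and>
        (y = (x + Suc a * s + b * t) mod n \<or> y = (x + a * s + Suc b * t) mod n))"
      unfolding walk_from by (auto simp: algebra_simps)
    also have "\<dots> \<longleftrightarrow> (\<exists>a b. a + b = Suc m \<and> y = (x + a * s + b * t) mod n)"
      by (rule ex_add_eq_Suc_iff[symmetric])
    finally show ?thesis
      using True by simp
  next
    case False
    then show ?thesis by (auto simp: circ_arc_def)
  qed
qed

lemma mod_translate_eq:
  fixes x y n M :: nat
  assumes "x < n" "y < n"
  shows "y = (x + M) mod n \<longleftrightarrow> (y + n - x) mod n = M mod n"
proof
  assume "y = (x + M) mod n"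
  moreover have "y + n - x = y + (n - x)"
    using assms by simp
  ultimately have "(y + n - x) mod n = (x + M + (n - x)) mod n"
    by (simp add: mod_add_left_eq)
  also have "x + M + (n - x) = M + n"
    using assms by simp
  finally show "(y + n - x) mod n = M mod n" by simp
next
  assume "(y + n - x) mod n = M mod n"
  then have "(x + M) mod n = (x + (y + n - x)) mod n"
    by (metis mod_add_right_eq)
  also have "x + (y + n - x) = y + n"
    using assms by simp
  finally show "y = (x + M) mod n"
    using assms by simp
qed

lemma circ_dist_two_translate:
  assumes "x < n" "y < n"
  shows "circ_dist n {s, t} x y = circ_dist n {s, t} 0 ((y + n - x) mod n)"
proof -
  have "y = (x + a * s + b * t) mod n \<longleftrightarrow> (y + n - x) mod n = (a * s + b * t) mod n" for a b
    using mod_translate_eq[OF assms, of "a * s + b * t"] by (simp only: add.assoc)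
  then have "circ_walk n {s, t} x y m \<longleftrightarrow> circ_walk n {s, t} 0 ((y + n - x) mod n) m" for m
    using assms by (simp add: circ_walk_two_iff)
  then have "circ_walk n {s, t} x y = circ_walk n {s, t} 0 ((y + n - x) mod n)"
    by (rule ext)
  then show ?thesis
    unfolding circ_dist_def by simp
qed

lemma circ_dist_two_set:
  "{circ_dist n {s, t} x y | x y. x < n \<and> y < n} = circ_dist n {s, t} 0 ` {..<n}"
proof (intro equalityI subsetI)
  fix d assume "d \<in> {circ_dist n {s, t} x y | x y. x < n \<and> y < n}"
  then obtain x y where xy: "x < n" "y < n" and "d = circ_dist n {s, t} x y"
    by blast
  then have "d = circ_dist n {s, t} 0 ((y + n - x) mod n)"
    using circ_dist_two_translate[OF xy] by simp
  moreover have "(y + n - x) mod n < n"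
    using xy by simp
  ultimately show "d \<in> circ_dist n {s, t} 0 ` {..<n}"
    by blast
next
  fix d assume "d \<in> circ_dist n {s, t} 0 ` {..<n}"
  then obtain j where "j < n" "d = circ_dist n {s, t} 0 j"
    by blast
  then show "d \<in> {circ_dist n {s, t} x y | x y. x < n \<and> y < n}"
    by (intro CollectI exI[of _ 0] exI[of _ j]) simp
qed

lemma div_add_mod_le_of_mod_eq:
  fixes a b c i k n :: nat
  assumes "0 < k" "n \<le> c * k" "(k - 1) * c \<le> n" "i = (a + b * k) mod n"
  shows "i div k + i mod k \<le> a + b"
proof -
  define Q R t where "Q = i div k" and "R = i mod k" and "t = (a + b * k) div n"
  obtain k' where k': "k = Suc k'"
    using assms(1) gr0_implies_Suc by blast
  have sum_eq: "a + b * k = i + t * n"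
    unfolding t_def assms(4) by (metis add.commute div_mult_mod_eq)
  have i_eq: "i = Q * k + R" and "R < k"
    unfolding Q_def R_def using assms(1) by simp_all
  have "t * n \<le> t * c * k"
    using assms(2) by (simp add: mult.assoc)
  then have "b * k \<le> Q * k + R + t * c * k"
    using sum_eq i_eq by linarith
  also have "\<dots> < (Q + t * c + 1) * k"
    using \<open>R < k\<close> by (simp add: algebra_simps)
  finally have "b < Q + t * c + 1"
    by (rule mult_less_cancel2[THEN iffD1, THEN conjunct2])
  then have "b * k' \<le> Q * k' + t * (k' * c)"
    using mult_le_mono1[of b "Q + t * c" k'] by (simp add: algebra_simps)
  moreover have "t * (k' * c) \<le> t * n"
    using assms(3) k' by simp
  moreover have "a + b + b * k' = Q + Q * k' + R + t * n"
    using sum_eq i_eq k' by (simp add: algebra_simps)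
  ultimately have "Q + R \<le> a + b"
    by linarith
  then show ?thesis
    unfolding Q_def R_def .
qed

lemma circ_dist_one_k:
  assumes "0 < k" "n \<le> c * k" "(k - 1) * c \<le> n" "i < n"
  shows "circ_dist n {1, k} 0 i = i div k + i mod k"
  unfolding circ_dist_def
proof (rule Least_equality)
  show "circ_walk n {1, k} 0 i (i div k + i mod k)"
    unfolding circ_walk_two_iff using assms(4)
    by (intro conjI exI[of _ "i mod k"] exI[of _ "i div k"]) auto
next
  fix m assume "circ_walk n {1, k} 0 i m"
  then obtain a b where "a + b = m" "i = (a + b * k) mod n"
    unfolding circ_walk_two_iff by auto
  with div_add_mod_le_of_mod_eq[OF assms(1-3)] show "i div k + i mod k \<le> m"
    by blast
qed

lemma div_add_mod_le_max:
  fixes j k N :: nat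
  assumes "0 < k" "j \<le> N"
  shows "j div k + j mod k \<le> N div k + max (N mod k) (k - 2)"
proof (cases "j div k = N div k")
  case True
  with assms(2) have "j mod k \<le> N mod k"
    by (metis add_le_cancel_left div_mult_mod_eq)
  with True show ?thesis by simp
next
  case False
  with div_le_mono[OF assms(2), of k] have "j div k + 1 \<le> N div k"
    by linarith
  moreover have "j mod k < k"
    using assms(1) by simp
  ultimately show ?thesis by linarith
qed

lemma Max_div_add_mod:
  fixes k N :: nat
  assumes "0 < k" "k \<le> N"
  shows "Max ((\<lambda>j. j div k + j mod k) ` {..N}) = N div k + max (N mod k) (k - 2)"
proof (rule Max_eqI)
  show "y \<le> N div k + max (N mod k) (k - 2)" if "y \<in> (\<lambda>j. j div k + j mod k) ` {..N}" for y
    using that div_add_mod_le_max[OF assms(1)] by auto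
  show "N div k + max (N mod k) (k - 2) \<in> (\<lambda>j. j div k + j mod k) ` {..N}"
  proof (cases "k - 2 \<le> N mod k")
    case True
    then show ?thesis by force
  next
    case False
    obtain Q where Q: "N div k = Suc Q"
      using assms div_le_mono[OF assms(2), of k] not0_implies_Suc by fastforce
    define j where "j = k - 1 + Q * k"
    have "j div k = Q"
      unfolding j_def using assms(1) by (subst div_mult_self1) simp_all
    moreover have "j mod k = k - 1"
      unfolding j_def using assms(1) by (subst mod_mult_self1) simp
    moreover have "j \<le> N"
      using Q div_times_less_eq_dividend[of N k] assms(1) unfolding j_def by simp
    ultimately show ?thesis
      using False Q by (intro image_eqI[of _ _ j]) auto
  qed
qed simp

theorem lemma8:
  fixes n k :: nat
  assumes "2 \<le> k" and "k \<le> n - 1"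
    and "real n \<ge> (real k - 1) * real_of_int \<lceil>real n / real k\<rceil>"
  shows "(\<forall>i<n. circ_dist n {1, k} 0 i = i div k + i mod k)
       \<and> circ_diam n {1, k} = (n - 1) div k + max ((n - 1) mod k) (k - 2)"
proof -
  define c where "c = nat \<lceil>real n / real k\<rceil>"
  have real_c: "real c = real_of_int \<lceil>real n / real k\<rceil>"
    unfolding c_def by simp
  have "real n / real k \<le> real c"
    unfolding real_c by (rule le_of_int_ceiling)
  then have "real n \<le> real (c * k)"
    using assms(1) by (simp add: divide_le_eq)
  then have n_le: "n \<le> c * k"
    by (simp only: of_nat_le_iff)
  have "real ((k - 1) * c) \<le> real n"
    using assms(1,3) real_c by (simp add: of_nat_diff)
  then have le_n: "(k - 1) * c \<le> n"
    by (simp only: of_nat_le_iff)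
  have dist: "\<forall>i<n. circ_dist n {1, k} 0 i = i div k + i mod k"
    using assms(1) circ_dist_one_k[OF _ n_le le_n] by simp
  have "{..<n} = {..n - 1}"
    using assms(1,2) by auto
  then have "circ_dist n {1, k} 0 ` {..<n} = (\<lambda>j. j div k + j mod k) ` {..n - 1}"
    using dist by (auto intro: image_cong)
  then have "circ_diam n {1, k} = (n - 1) div k + max ((n - 1) mod k) (k - 2)"
    unfolding circ_diam_def circ_dist_two_set using assms(1,2) by (simp add: Max_div_add_mod)
  with dist show ?thesis ..
qed

end
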